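(* Let $\varPsi_{p,n}:=\varPsi_{p,n}(0)$ and $\vec\eta_{p,n}:=\vec e(\varPsi_{p,n})$ for $p\le n$. Then: (i) for all $p\le n$, $|\varPsi_{p,n}|=S^+_{p,n}$; (ii) for all $p<n<q$: almost surely on the event $\{\min_{h\in[p,q]}S_h=\min_{h\in[n,q]}S_h\}$ one has $\vec\eta_{p,q}=\vec\eta_{n,q}$; and almost surely on the event $\{\min_{h\in[p,n]}S_h=\min_{h\in[p,q]}S_h\}\cap\{S^+_{p,j}>0\ \forall j\in[n,q]\}$ one has $\vec\eta_{p,n}=\vec\eta_{p,q}$; (iii) with $T_{p,x}=\inf\{q\ge p:S_q-S_p=-|x|\}$, for all $p\le n$ and $x\in G_{\mathbb N}$, $$\varPsi_{p,n}(x)=(x+\vec e(x)S_{p,n})1_{\{n\le T_{p,x}\}}+\varPsi_{p,n}1_{\{n>T_{p,x}\}},$$ $$K_{p,n}(x)=E[\delta_{\varPsi_{p,n}(x)}\mid\sigma(S)]=\delta_{x+\vec e(x)S_{p,n}}1_{\{n\le T_{p,x}\}}+\sum_{i=1}^N\alpha_i\delta_{S^+_{p,n}\vec e_i}1_{\{n>T_{p,x}\}}.$$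
   Context: Fix $N\in\mathbb N^*$ and $\alpha_1,\dots,\alpha_N>0$ with $\sum_{i=1}^N\alpha_i=1$. $G$ is the graph consisting of $N$ half-lines $D_i=\{h\vec e_i:h\ge0\}$ emanating from $0$ ($\vec e_i$ distinct unit vectors), with metric $d(h\vec e_i,h'\vec e_j)=h+h'$ if $i\ne j$, $|h-h'|$ if $i=j$; $|x|:=d(x,0)$. Define $\vec e(z)=\vec e_i$ if $z\in D_i\setminus\{0\}$ and $\vec e(0)=\vec e_N$. $G_{\mathbb N}=\{x\in G:|x|\in\mathbb N\}$. $S=(S_n)_{n\in\mathbb Z}$ is a simple random walk on $\mathbb Z$ indexed by $\mathbb Z$ ($S_0=0$, $(S_n)_{n\ge0}$ and $(S_{-n})_{n\ge0}$ independent simple random walks), and $(\vec\eta_i)_{i\in\mathbb Z}$ is an i.i.d. sequence with law $\sum_i\alpha_i\delta_{\vec e_i}$, independent of $S$. For $p\le n$, $S_{p,n}=S_n-S_p$, $S^+_{p,n}=S_n-\min_{h\in[p,n]}S_h$. For $x\in G_{\mathbb N}$: $\varPsi_{p,p+1}(x)=x+\vec e(x)S_{p,p+1}$ if $x\ne0$, $\varPsi_{p,p+1}(0)=\vec\eta_pS^+_{p,p+1}$; $K_{p,p+1}(x)=\delta_{x+\vec e(x)S_{p,p+1}}$ if $x\ne0$, $K_{p,p+1}(0)=\sum_i\alpha_i\delta_{S^+_{p,p+1}\vec e_i}$. For $p<n$: $\varPsi_{p,n}=\varPsi_{n-1,n}\circ\cdots\circ\varPsi_{p,p+1}$, $K_{p,n}=K_{p,p+1}K_{p+1,p+2}\cdots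 K_{n-1,n}$ (with $KK'(x,A)=\sum_yK'(y,A)K(x,\{y\})$); $\varPsi_{p,p}(x)=x$, $K_{p,p}(x)=\delta_x$. *)

theory Defs
  imports "HOL-Probability.Probability"
begin

definition minS :: "(int \<Rightarrow> int) \<Rightarrow> int \<Rightarrow> int \<Rightarrow> int" where
  "minS S a b = Min (S ` {a..b})"

definition Splus :: "(int \<Rightarrow> int) \<Rightarrow> int \<Rightarrow> int \<Rightarrow> int" where
  "Splus S p n = S n - minS S p n"

definition GN :: "(nat \<Rightarrow> 'v::real_normed_vector) \<Rightarrow> nat \<Rightarrow> 'v set" where
  "GN e N = {real h *\<^sub>R e i | h i. i \<in> {1..N}}"

definition edir :: "(nat \<Rightarrow> 'v::real_normed_vector) \<Rightarrow> nat \<Rightarrow> 'v \<Rightarrow> 'v" where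
  "edir e N z = (if z = 0 then e N
                 else e (THE i. i \<in> {1..N} \<and> (\<exists>h>0. z = h *\<^sub>R e i)))"

definition Psi1 :: "(nat \<Rightarrow> 'v::real_normed_vector) \<Rightarrow> nat \<Rightarrow> (int \<Rightarrow> int) \<Rightarrow> (int \<Rightarrow> 'v)
    \<Rightarrow> int \<Rightarrow> 'v \<Rightarrow> 'v" where
  "Psi1 e N S eta p x =
     (if x = 0 then real_of_int (Splus S p (p + 1)) *\<^sub>R eta p
      else x + real_of_int (S (p + 1) - S p) *\<^sub>R edir e N x)"

fun psi_iter :: "(nat \<Rightarrow> 'v::real_normed_vector) \<Rightarrow> nat \<Rightarrow> (int \<Rightarrow> int) \<Rightarrow> (int \<Rightarrow> 'v)
    \<Rightarrow> int \<Rightarrow> nat \<Rightarrow> 'v \<Rightarrow> 'v" where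
  "psi_iter e N S eta p 0 x = x"
| "psi_iter e N S eta p (Suc k) x = Psi1 e N S eta (p + int k) (psi_iter e N S eta p k x)"

text \<open>Psi_{p,n} = Psi_{n-1,n} o ... o Psi_{p,p+1} (identity for n = p); meaningful for p <= n.\<close>
definition Psi :: "(nat \<Rightarrow> 'v::real_normed_vector) \<Rightarrow> nat \<Rightarrow> (int \<Rightarrow> int) \<Rightarrow> (int \<Rightarrow> 'v)
    \<Rightarrow> int \<Rightarrow> int \<Rightarrow> 'v \<Rightarrow> 'v" where
  "Psi e N S eta p n x = psi_iter e N S eta p (nat (n - p)) x"

definition alpha_pmf :: "(nat \<Rightarrow> 'v::real_normed_vector) \<Rightarrow> nat \<Rightarrow> (nat \<Rightarrow> real) \<Rightarrow> 'v pmf" where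
  "alpha_pmf e N \<alpha> = map_pmf e (embed_pmf (\<lambda>i. if i \<in> {1..N} then \<alpha> i else 0))"

definition K1 :: "(nat \<Rightarrow> 'v::real_normed_vector) \<Rightarrow> nat \<Rightarrow> (nat \<Rightarrow> real) \<Rightarrow> (int \<Rightarrow> int)
    \<Rightarrow> int \<Rightarrow> 'v \<Rightarrow> 'v pmf" where
  "K1 e N \<alpha> S p x =
     (if x = 0 then map_pmf (\<lambda>v. real_of_int (Splus S p (p + 1)) *\<^sub>R v) (alpha_pmf e N \<alpha>)
      else return_pmf (x + real_of_int (S (p + 1) - S p) *\<^sub>R edir e N x))"

text \<open>Kernel product: (K K')(x) = sum_y K(x,{y}) K'(y,.) = bind_pmf (K x) K'.\<close>
fun k_iter :: "(nat \<Rightarrow> 'v::real_normed_vector) \<Rightarrow> nat \<Rightarrow> (nat \<Rightarrow> real) \<Rightarrow> (int \<Rightarrow> int)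
    \<Rightarrow> int \<Rightarrow> nat \<Rightarrow> 'v \<Rightarrow> 'v pmf" where
  "k_iter e N \<alpha> S p 0 x = return_pmf x"
| "k_iter e N \<alpha> S p (Suc k) x = bind_pmf (k_iter e N \<alpha> S p k x) (K1 e N \<alpha> S (p + int k))"

definition Kker :: "(nat \<Rightarrow> 'v::real_normed_vector) \<Rightarrow> nat \<Rightarrow> (nat \<Rightarrow> real) \<Rightarrow> (int \<Rightarrow> int)
    \<Rightarrow> int \<Rightarrow> int \<Rightarrow> 'v \<Rightarrow> 'v pmf" where
  "Kker e N \<alpha> S p n x = k_iter e N \<alpha> S p (nat (n - p)) x"

text \<open>T_{p,x} = inf {q >= p : S_q - S_p = -r} with r = |x|, inf of the empty set = +infinity.\<close>
definition hit_time :: "(int \<Rightarrow> int) \<Rightarrow> int \<Rightarrow> real \<Rightarrow> ereal" where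
  "hit_time S p r = Inf ((\<lambda>q. ereal (real_of_int q)) ` {q. p \<le> q \<and> real_of_int (S q - S p) = - r})"

text \<open>sigma(X): sigma-algebra on the sample space generated by a whole process X indexed by the integers
  (each coordinate carrying the discrete sigma-algebra).\<close>
definition sigmaS :: "'w measure \<Rightarrow> ('w \<Rightarrow> int \<Rightarrow> 'b) \<Rightarrow> 'w measure" where
  "sigmaS M S = vimage_algebra (space M) S (PiM UNIV (\<lambda>_. count_space UNIV))"

end

theory Submission
  imports Defs
begin

(* The argument is pathwise: on the almost sure event where S moves by +-1 steps and every
   eta_k is one of the directions e_i, the whole proposition is a deterministic statement about
   a single integer path s and a single direction sequence et.
   1. Path functionals: the running minimum minS, the reflected walk Splus and the LAST time
      lastmin at which the running minimum is attained.
   2. The flow started at 0 has the closed form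
        Psi_{p,n}(0) = S^+_{p,n} * eta(lastmin p n),
      which gives (i) and, through the description of lastmin, both halves of (ii).
   3. Started at x <> 0 the flow moves along its ray until the hitting time T_{p,x} of 0 and
      then coincides with the flow started at 0; the same holds for the kernel, which after T
      is the law S^+_{p,n} * sum_i alpha_i delta_{e_i}. *)

section \<open>Running minimum, reflected walk and the last minimum time\<close>

lemma minS_le: "a \<le> m \<Longrightarrow> m \<le> b \<Longrightarrow> minS s a b \<le> s m"
  unfolding minS_def by (rule Min_le) auto

lemma minS_attained: "a \<le> b \<Longrightarrow> \<exists>m\<in>{a..b}. s m = minS s a b"
  unfolding minS_def using Min_in[of "s ` {a..b}"] by fastforce

lemma minS_ge: "a \<le> b \<Longrightarrow> (\<And>m. a \<le> m \<Longrightarrow> m \<le> b \<Longrightarrow> c \<le> s m) \<Longrightarrow> c \<le> minS s a b"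
  unfolding minS_def by (subst Min_ge_iff) auto

lemma minS_single [simp]: "minS s a a = s a"
  by (simp add: minS_def)

lemma minS_split:
  assumes "a \<le> b" "b \<le> c"
  shows "minS s a c = min (minS s a b) (minS s b c)"
proof (rule antisym)
  obtain m where m: "m \<in> {a..c}" "s m = minS s a c"
    using minS_attained[of a c s] assms by auto
  show "min (minS s a b) (minS s b c) \<le> minS s a c"
  proof (cases "m \<le> b")
    case True then show ?thesis using minS_le[of a m b s] m by auto
  next
    case False then show ?thesis using minS_le[of b m c s] m by auto
  qed
next
  show "minS s a c \<le> min (minS s a b) (minS s b c)"
    using assms by (auto intro!: minS_ge minS_le)
qed

lemma minS_two: "minS s b (b + 1) = min (s b) (s (b + 1))"
proof -
  have "{b..b + 1} = {b, b + 1}" by auto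
  then show ?thesis by (simp add: minS_def)
qed

lemma minS_Suc: "a \<le> b \<Longrightarrow> minS s a (b + 1) = min (minS s a b) (s (b + 1))"
  using minS_split[of a b "b + 1" s] minS_two[of s b] minS_le[of a b b s] by auto

lemma Splus_step: "Splus s m (m + 1) = max 0 (s (m + 1) - s m)"
  by (simp add: Splus_def minS_two)

lemma Splus_nonneg: "a \<le> b \<Longrightarrow> Splus s a b \<ge> 0"
  using minS_le[of a b b s] by (simp add: Splus_def)

definition stepw :: "(int \<Rightarrow> int) \<Rightarrow> bool" where
  "stepw s \<longleftrightarrow> (\<forall>k. s (k + 1) - s k = 1 \<or> s (k + 1) - s k = -1)"

text \<open>Lindley's recursion: S^+ is reflected at 0.\<close>
lemma Splus_Suc:
  assumes "stepw s" and "a \<le> n"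
  shows "Splus s a (n + 1) =
    (if Splus s a n = 0 then max 0 (s (n + 1) - s n) else Splus s a n + (s (n + 1) - s n))"
proof -
  have "s (n + 1) - s n = 1 \<or> s (n + 1) - s n = -1" using assms(1) by (simp add: stepw_def)
  moreover have "minS s a (n + 1) = min (minS s a n) (s (n + 1))" using minS_Suc assms(2) by simp
  moreover have "minS s a n \<le> s n" using minS_le assms(2) by simp
  ultimately show ?thesis by (auto simp: Splus_def)
qed

lemma stepw_increment_bound:
  assumes "stepw s"
  shows "s (m + int k) - s m \<le> int k"
proof (induction k)
  case (Suc k)
  have "s (m + int k + 1) - s (m + int k) \<le> 1"
    using assms by (auto simp: stepw_def dest: spec[of _ "m + int k"])
  moreover have "m + int (Suc k) = m + int k + 1" by simp
  ultimately show ?case using Suc by (simp only: of_nat_Suc)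
qed simp

text \<open>Hence S^+_{p,n} \<le> n - p: S^+ takes only finitely many values on [p,n].\<close>
lemma Splus_le:
  assumes "stepw s" "p \<le> n"
  shows "Splus s p n \<le> n - p"
proof -
  obtain m where m: "m \<in> {p..n}" "s m = minS s p n" using minS_attained assms(2) by blast
  have "s (m + int (nat (n - m))) - s m \<le> int (nat (n - m))"
    by (rule stepw_increment_bound[OF assms(1)])
  then show ?thesis using m by (simp add: Splus_def)
qed

text \<open>The last time in [a,b] at which the minimum of s over [a,b] is attained; the flow
  started at 0 carries the direction drawn at this time.\<close>
definition lastmin :: "(int \<Rightarrow> int) \<Rightarrow> int \<Rightarrow> int \<Rightarrow> int" where
  "lastmin s a b = Max {m\<in>{a..b}. s m = minS s a b}"

lemma finite_argmin_set: "finite {m\<in>{a..b::int}. s m = c}"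
  by (rule finite_subset[of _ "{a..b}"]) auto

lemma lastmin_in:
  assumes "a \<le> b"
  shows "lastmin s a b \<in> {a..b} \<and> s (lastmin s a b) = minS s a b"
proof -
  have "{m\<in>{a..b}. s m = minS s a b} \<noteq> {}" using minS_attained[OF assms, of s] by blast
  then have "lastmin s a b \<in> {m\<in>{a..b}. s m = minS s a b}"
    unfolding lastmin_def by (rule Max_in[OF finite_argmin_set])
  then show ?thesis by simp
qed

lemma lastmin_greatest: "m \<in> {a..b} \<Longrightarrow> s m = minS s a b \<Longrightarrow> m \<le> lastmin s a b"
  unfolding lastmin_def by (rule Max_ge[OF finite_argmin_set]) simp

lemma lastmin_at_zero:
  assumes an: "a \<le> n" and zero: "Splus s a n = 0"
  shows "lastmin s a n = n"
proof (rule antisym)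
  show "lastmin s a n \<le> n" using lastmin_in[OF an, of s] by simp
  show "n \<le> lastmin s a n" using an zero by (intro lastmin_greatest) (auto simp: Splus_def)
qed

lemma lastmin_Suc:
  assumes an: "a \<le> n" and pos: "Splus s a (n + 1) \<noteq> 0"
  shows "lastmin s a (n + 1) = lastmin s a n"
proof -
  have ne: "s (n + 1) \<noteq> minS s a (n + 1)" using pos by (simp add: Splus_def)
  then have mins: "minS s a (n + 1) = minS s a n" using minS_Suc[OF an, of s] by linarith
  have "m \<in> {a..n + 1} \<and> s m = minS s a (n + 1) \<longleftrightarrow> m \<in> {a..n} \<and> s m = minS s a n" for m
    using ne mins an by (cases "m = n + 1") auto
  then have "{m\<in>{a..n + 1}. s m = minS s a (n + 1)} = {m\<in>{a..n}. s m = minS s a n}" by blast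
  then show ?thesis unfolding lastmin_def mins by simp
qed

lemma window_functionals:
  assumes "\<forall>k\<in>{a..b}. s k = s' k"
  shows "minS s a b = minS s' a b" and "lastmin s a b = lastmin s' a b"
proof -
  have "s ` {a..b} = s' ` {a..b}" using assms by (intro image_cong) auto
  then show mins: "minS s a b = minS s' a b" unfolding minS_def by simp
  have "{m\<in>{a..b}. s m = minS s a b} = {m\<in>{a..b}. s' m = minS s' a b}"
    using assms mins by auto
  then show "lastmin s a b = lastmin s' a b" unfolding lastmin_def by simp
qed

lemma hit_time_iff:
  assumes "h \<ge> 0"
  shows "ereal (real_of_int n) \<le> hit_time s p (real_of_int h) \<longleftrightarrow> (\<forall>q\<in>{p..<n}. s q - s p \<noteq> -h)"
proof -
  have "ereal (real_of_int n) \<le> hit_time s p (real_of_int h) \<longleftrightarrow>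
        (\<forall>q. p \<le> q \<and> real_of_int (s q - s p) = - real_of_int h \<longrightarrow> n \<le> q)"
    unfolding hit_time_def by (auto simp: le_Inf_iff)
  also have "\<dots> \<longleftrightarrow> (\<forall>q. p \<le> q \<and> s q - s p = - h \<longrightarrow> n \<le> q)"
    by (metis of_int_eq_iff of_int_minus)
  also have "\<dots> \<longleftrightarrow> (\<forall>q\<in>{p..<n}. s q - s p \<noteq> -h)"
    by (auto simp: not_le)
  finally show ?thesis .
qed

lemma first_hit:
  fixes P :: "int \<Rightarrow> bool"
  assumes "\<exists>q\<in>{p..<n}. P q"
  obtains t where "t \<in> {p..<n}" "P t" "\<forall>m\<in>{p..<t}. \<not> P m"
proof -
  define Q where "Q = {q\<in>{p..<n}. P q}"
  have fQ: "finite Q" by (rule finite_subset[of _ "{p..<n}"]) (auto simp: Q_def)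
  have nQ: "Q \<noteq> {}" using assms by (auto simp: Q_def)
  have "Min Q \<in> Q" and "\<forall>m\<in>Q. Min Q \<le> m" using Min_in[OF fQ nQ] Min_le[OF fQ] by auto
  then show ?thesis using that unfolding Q_def by force
qed

section \<open>The deterministic flow on the star graph\<close>

lemma psi_iter_add:
  "psi_iter e N s et p (a + b) x = psi_iter e N s et (p + int a) b (psi_iter e N s et p a x)"
  by (induction b) (simp_all add: algebra_simps)

lemma k_iter_add:
  "k_iter e N \<alpha> s p (a + b) x = bind_pmf (k_iter e N \<alpha> s p a x) (k_iter e N \<alpha> s (p + int a) b)"
  by (induction b) (simp_all add: bind_return_pmf' bind_assoc_pmf algebra_simps)

lemma alpha_pmf_facts:
  assumes apos: "\<forall>i\<in>{1..N}. \<alpha> i > 0" and asum: "(\<Sum>i=1..N. \<alpha> i) = 1"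
  shows "set_pmf (alpha_pmf e N \<alpha>) \<subseteq> e ` {1..N}"
    and "measure_pmf.prob (alpha_pmf e N \<alpha>) C = (\<Sum>i\<in>{1..N}. \<alpha> i * indicator C (e i))"
proof -
  define f where "f = (\<lambda>i. if i \<in> {1..N} then \<alpha> i else 0)"
  have nn: "\<And>i. 0 \<le> f i" using apos by (auto simp: f_def less_imp_le)
  have "(\<integral>\<^sup>+i. ennreal (f i) \<partial>count_space UNIV) = (\<Sum>i\<in>{1..N}. ennreal (f i))"
    by (rule nn_integral_count_space') (auto simp: f_def)
  also have "\<dots> = ennreal (\<Sum>i\<in>{1..N}. f i)" using nn by (simp add: sum_ennreal)
  finally have int1: "(\<integral>\<^sup>+i. ennreal (f i) \<partial>count_space UNIV) = 1" using asum by (simp add: f_def)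
  define Q where "Q = embed_pmf f"
  have pQ: "\<And>i. pmf Q i = f i" unfolding Q_def by (rule pmf_embed_pmf[OF nn int1])
  have sQ: "set_pmf Q = {1..N}" unfolding Q_def using apos
    by (subst set_embed_pmf[OF nn int1]) (auto simp: f_def)
  have al: "alpha_pmf e N \<alpha> = map_pmf e Q" by (simp add: alpha_pmf_def Q_def f_def)
  show "set_pmf (alpha_pmf e N \<alpha>) \<subseteq> e ` {1..N}" using al sQ by simp
  have "measure_pmf.prob (alpha_pmf e N \<alpha>) C = measure_pmf.prob Q (e -` C \<inter> set_pmf Q)"
    using al by (simp add: measure_Int_set_pmf)
  also have "\<dots> = (\<Sum>i\<in>{1..N} \<inter> e -` C. \<alpha> i)"
    using sQ pQ by (simp add: measure_measure_pmf_finite Int_commute f_def)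
  also have "\<dots> = (\<Sum>i\<in>{1..N}. \<alpha> i * indicator C (e i))"
    by (simp add: sum.inter_restrict indicator_def if_distrib cong: if_cong)
  finally show "measure_pmf.prob (alpha_pmf e N \<alpha>) C = (\<Sum>i\<in>{1..N}. \<alpha> i * indicator C (e i))" .
qed

locale star =
  fixes e :: "nat \<Rightarrow> 'v::real_normed_vector" and N :: nat
  assumes inj: "inj_on e {1..N}" and nrm: "\<forall>i\<in>{1..N}. norm (e i) = 1"
begin

lemma ray_nonzero: "i \<in> {1..N} \<Longrightarrow> h > 0 \<Longrightarrow> h *\<^sub>R e i \<noteq> 0"
  using nrm by (metis norm_zero scaleR_eq_0_iff less_irrefl zero_neq_one)

lemma edir_ray:
  assumes i: "i \<in> {1..N}" and h: "h > 0"
  shows "edir e N (h *\<^sub>R e i) = e i"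
proof -
  have "(THE j. j \<in> {1..N} \<and> (\<exists>h'>0. h *\<^sub>R e i = h' *\<^sub>R e j)) = i"
  proof (rule the_equality)
    show "i \<in> {1..N} \<and> (\<exists>h'>0. h *\<^sub>R e i = h' *\<^sub>R e i)" using i h by auto
  next
    fix j assume j: "j \<in> {1..N} \<and> (\<exists>h'>0. h *\<^sub>R e i = h' *\<^sub>R e j)"
    then obtain h' where h': "h' > 0" "h *\<^sub>R e i = h' *\<^sub>R e j" by auto
    then have "h = h'" using nrm i j h by (metis abs_of_pos norm_scaleR mult.right_neutral)
    then have "e i = e j" using h' h by simp
    then show "j = i" using inj i j by (auto dest: inj_onD)
  qed
  then show ?thesis using ray_nonzero[OF i h] by (simp add: edir_def)
qed

lemma Psi1_ray:
  assumes "i \<in> {1..N}" and "h > 0"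
  shows "Psi1 e N s et m (h *\<^sub>R e i) = (h + real_of_int (s (m + 1) - s m)) *\<^sub>R e i"
  using ray_nonzero[OF assms] edir_ray[OF assms] by (simp add: Psi1_def scaleR_add_left)

lemma K1_ray:
  assumes "i \<in> {1..N}" and "h > 0"
  shows "K1 e N \<alpha> s m (h *\<^sub>R e i) = return_pmf ((h + real_of_int (s (m + 1) - s m)) *\<^sub>R e i)"
  using ray_nonzero[OF assms] edir_ray[OF assms] by (simp add: K1_def scaleR_add_left)

lemma Psi1_closed_form:
  assumes st: "stepw s" and gd: "\<forall>k. et k \<in> e ` {1..N}" and pn: "p \<le> n"
  shows "Psi1 e N s et n (real_of_int (Splus s p n) *\<^sub>R et (lastmin s p n))
       = real_of_int (Splus s p (n + 1)) *\<^sub>R et (lastmin s p (n + 1))"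
proof (cases "Splus s p n = 0")
  case True
  then have "Splus s p (n + 1) = max 0 (s (n + 1) - s n)" using Splus_Suc[OF st pn] by simp
  then show ?thesis
    using True lastmin_Suc[OF pn] lastmin_at_zero[OF pn True]
    by (cases "Splus s p (n + 1) = 0") (auto simp: Psi1_def Splus_step)
next
  case False
  then have pos: "real_of_int (Splus s p n) > 0" using Splus_nonneg[OF pn, of s] by simp
  obtain i where i: "i \<in> {1..N}" "et (lastmin s p n) = e i" using gd by blast
  have "Splus s p (n + 1) = Splus s p n + (s (n + 1) - s n)" using Splus_Suc[OF st pn] False by simp
  then show ?thesis
    using Psi1_ray[OF i(1) pos] i lastmin_Suc[OF pn]
    by (cases "Splus s p (n + 1) = 0") auto
qed

lemma Psi_zero:
  assumes st: "stepw s" and gd: "\<forall>k. et k \<in> e ` {1..N}" and pn: "p \<le> n"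
  shows "Psi e N s et p n 0 = real_of_int (Splus s p n) *\<^sub>R et (lastmin s p n)"
proof -
  have "psi_iter e N s et p k 0 = real_of_int (Splus s p (p + int k)) *\<^sub>R et (lastmin s p (p + int k))" for k
  proof (induction k)
    case (Suc k)
    have "p + int (Suc k) = p + int k + 1" by simp
    then show ?case using Suc Psi1_closed_form[OF st gd, of p "p + int k"] by (simp only:) simp
  qed (simp add: Splus_def)
  then show ?thesis using pn by (simp add: Psi_def)
qed

lemma norm_Psi_zero:
  assumes st: "stepw s" and gd: "\<forall>k. et k \<in> e ` {1..N}" and pn: "p \<le> n"
  shows "norm (Psi e N s et p n 0) = real_of_int (Splus s p n)"
proof -
  obtain i where "i \<in> {1..N}" "et (lastmin s p n) = e i" using gd by blast
  then show ?thesis using Psi_zero[OF assms] nrm Splus_nonneg[OF pn, of s] by simp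
qed

lemma edir_Psi_zero:
  assumes st: "stepw s" and gd: "\<forall>k. et k \<in> e ` {1..N}" and pn: "p \<le> n"
    and pos: "Splus s p n \<noteq> 0"
  shows "edir e N (Psi e N s et p n 0) = et (lastmin s p n)"
proof -
  obtain i where i: "i \<in> {1..N}" "et (lastmin s p n) = e i" using gd by blast
  have "real_of_int (Splus s p n) > 0" using Splus_nonneg[OF pn, of s] pos by simp
  then show ?thesis using Psi_zero[OF assms(1-3)] edir_ray[OF i(1)] i by simp
qed

text \<open>Statement (ii), first half: if the minimum over [p,q] is already attained in [n,q], both
  flows share the same last minimum time, hence the same direction.\<close>
lemma edir_Psi_min_right:
  assumes st: "stepw s" and gd: "\<forall>k. et k \<in> e ` {1..N}"
    and pn: "p < n" and nq: "n < q" and mm: "minS s p q = minS s n q"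
  shows "edir e N (Psi e N s et p q 0) = edir e N (Psi e N s et n q 0)"
proof -
  have ln: "lastmin s n q \<in> {n..q} \<and> s (lastmin s n q) = minS s n q" using lastmin_in nq by simp
  have lp: "lastmin s p q \<in> {p..q} \<and> s (lastmin s p q) = minS s p q" using lastmin_in pn nq by simp
  have le: "lastmin s n q \<le> lastmin s p q" using ln mm pn by (intro lastmin_greatest) auto
  moreover have "lastmin s p q \<le> lastmin s n q" using lp ln le mm by (intro lastmin_greatest) auto
  ultimately have "lastmin s p q = lastmin s n q" by simp
  moreover have "Splus s p q = Splus s n q" using mm by (simp add: Splus_def)
  ultimately show ?thesis
    using edir_Psi_zero[OF st gd] Psi_zero[OF st gd, of p q] Psi_zero[OF st gd, of n q] pn nq
    by (cases "Splus s n q = 0") auto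
qed

text \<open>Statement (ii), second half: if the minimum over [p,q] is attained in [p,n] and S^+
  stays positive on [n,q], no later time attains it, so the last minimum time is unchanged.\<close>
lemma edir_Psi_min_left:
  assumes st: "stepw s" and gd: "\<forall>k. et k \<in> e ` {1..N}"
    and pn: "p < n" and nq: "n < q" and mm: "minS s p n = minS s p q"
    and pos: "\<forall>j\<in>{n..q}. Splus s p j > 0"
  shows "edir e N (Psi e N s et p n 0) = edir e N (Psi e N s et p q 0)"
proof -
  have late: "s m \<noteq> minS s p q" if "m \<in> {n..q}" for m
  proof
    assume "s m = minS s p q"
    moreover have "minS s p q \<le> minS s p m" using that pn by (intro minS_ge) (auto intro: minS_le)
    moreover have "minS s p m \<le> s m" using that pn by (intro minS_le) auto
    ultimately have "Splus s p m = 0" by (simp add: Splus_def)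
    then show False using pos that by force
  qed
  have "m \<in> {p..q} \<and> s m = minS s p q \<longleftrightarrow> m \<in> {p..n} \<and> s m = minS s p n" for m
    using late[of m] mm nq by (cases "n \<le> m") auto
  then have "{m\<in>{p..q}. s m = minS s p q} = {m\<in>{p..n}. s m = minS s p n}" by blast
  then have "lastmin s p q = lastmin s p n" unfolding lastmin_def by (simp add: mm)
  moreover have "Splus s p n \<noteq> 0" "Splus s p q \<noteq> 0"
    using pos[rule_format, of n] pos[rule_format, of q] nq by auto
  ultimately show ?thesis using edir_Psi_zero[OF st gd] pn nq by simp
qed

lemma Kker_zero:
  assumes st: "stepw s" and sa: "set_pmf (alpha_pmf e N \<alpha>) \<subseteq> e ` {1..N}" and pn: "p \<le> n"
  shows "Kker e N \<alpha> s p n 0 = map_pmf (\<lambda>v. real_of_int (Splus s p n) *\<^sub>R v) (alpha_pmf e N \<alpha>)"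
proof -
  define A where "A = alpha_pmf e N \<alpha>"
  have step: "bind_pmf (map_pmf (\<lambda>v. real_of_int (Splus s p m) *\<^sub>R v) A) (K1 e N \<alpha> s m)
      = map_pmf (\<lambda>v. real_of_int (Splus s p (m + 1)) *\<^sub>R v) A" if pm: "p \<le> m" for m
  proof (cases "Splus s p m = 0")
    case True
    then show ?thesis using Splus_Suc[OF st pm]
      by (simp add: bind_map_pmf bind_return_pmf K1_def Splus_step A_def)
  next
    case False
    then have pos: "real_of_int (Splus s p m) > 0" using Splus_nonneg[OF pm, of s] by simp
    have "bind_pmf (map_pmf (\<lambda>v. real_of_int (Splus s p m) *\<^sub>R v) A) (K1 e N \<alpha> s m)
        = bind_pmf A (\<lambda>v. K1 e N \<alpha> s m (real_of_int (Splus s p m) *\<^sub>R v))"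
      by (simp add: bind_map_pmf)
    also have "\<dots> = bind_pmf A (\<lambda>v. return_pmf (real_of_int (Splus s p (m + 1)) *\<^sub>R v))"
      using sa K1_ray[OF _ pos] Splus_Suc[OF st pm] False
      by (intro bind_pmf_cong) (auto simp: A_def)
    finally show ?thesis by (simp add: map_pmf_def)
  qed
  have "k_iter e N \<alpha> s p k 0 = map_pmf (\<lambda>v. real_of_int (Splus s p (p + int k)) *\<^sub>R v) A" for k
  proof (induction k)
    case (Suc k)
    have "p + int (Suc k) = p + int k + 1" by simp
    then show ?case using Suc step[of "p + int k"] by (simp only:) simp
  qed (simp add: Splus_def map_pmf_const)
  then show ?thesis using pn by (simp add: Kker_def A_def)
qed

lemma flow_before_hit:
  assumes st: "stepw s" and i: "i \<in> {1..N}" and h: "h \<ge> 1"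
    and nohit: "\<forall>m\<in>{p..<p + int k}. s m - s p \<noteq> -h"
  shows "psi_iter e N s et p k (real_of_int h *\<^sub>R e i) = real_of_int (h + s (p + int k) - s p) *\<^sub>R e i
    \<and> h + s (p + int k) - s p \<ge> 0
    \<and> k_iter e N \<alpha> s p k (real_of_int h *\<^sub>R e i) = return_pmf (real_of_int (h + s (p + int k) - s p) *\<^sub>R e i)"
  using nohit
proof (induction k)
  case (Suc k)
  define n where "n = p + int k"
  have n1: "p + int (Suc k) = n + 1" by (simp add: n_def)
  have IH: "psi_iter e N s et p k (real_of_int h *\<^sub>R e i) = real_of_int (h + s n - s p) *\<^sub>R e i"
     "h + s n - s p \<ge> 0"
     "k_iter e N \<alpha> s p k (real_of_int h *\<^sub>R e i) = return_pmf (real_of_int (h + s n - s p) *\<^sub>R e i)"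
    using Suc by (auto simp: n_def)
  have "s n - s p \<noteq> -h" using Suc.prems by (auto simp: n_def)
  then have pos: "real_of_int (h + s n - s p) > 0" using IH(2) by simp
  have sum: "real_of_int (h + s n - s p) + real_of_int (s (n + 1) - s n) = real_of_int (h + s (n + 1) - s p)"
    by simp
  have "s (n + 1) - s n \<ge> -1" using st by (auto simp: stepw_def dest: spec[of _ n])
  then show ?case
    using IH pos Psi1_ray[OF i pos, of s et n] K1_ray[OF i pos, of \<alpha> s n]
    unfolding n1 sum by (simp add: n_def bind_return_pmf)
qed (use h in simp)

text \<open>Once the walk started at distance h hits 0 at time t, the flow and the kernel restart
  from 0, so they agree with the flow and the kernel started at 0.\<close>
lemma flow_after_hit:
  assumes st: "stepw s" and gd: "\<forall>k. et k \<in> e ` {1..N}" and sa: "set_pmf (alpha_pmf e N \<alpha>) \<subseteq> e ` {1..N}"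
    and i: "i \<in> {1..N}" and h: "h \<ge> 1" and pt: "p \<le> t" and tn: "t \<le> n"
    and ht: "s t - s p = -h" and nohit: "\<forall>m\<in>{p..<t}. s m - s p \<noteq> -h"
  shows "Psi e N s et p n (real_of_int h *\<^sub>R e i) = Psi e N s et p n 0"
    and "Kker e N \<alpha> s p n (real_of_int h *\<^sub>R e i) = map_pmf (\<lambda>v. real_of_int (Splus s p n) *\<^sub>R v) (alpha_pmf e N \<alpha>)"
proof -
  define kt where "kt = nat (t - p)"
  define kn where "kn = nat (n - t)"
  have kt: "p + int kt = t" and knn: "nat (n - p) = kt + kn" and tkn: "t + int kn = n"
    using pt tn by (simp_all add: kt_def kn_def)
  let ?x = "real_of_int h *\<^sub>R e i"
  have at_t: "psi_iter e N s et p kt ?x = 0" "k_iter e N \<alpha> s p kt ?x = return_pmf 0"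
    using flow_before_hit[OF st i h, of p kt et \<alpha>] nohit kt ht by auto
  have mt: "minS s p t = s t"
  proof (rule antisym)
    show "minS s p t \<le> s t" using minS_le pt by simp
    show "s t \<le> minS s p t"
    proof (rule minS_ge[OF pt])
      fix m assume "p \<le> m" "m \<le> t"
      then show "s t \<le> s m"
        using flow_before_hit[OF st i h, of p "nat (m - p)" et \<alpha>] nohit ht by auto
    qed
  qed
  then have "psi_iter e N s et p kt 0 = 0"
    using Psi_zero[OF st gd pt] kt by (simp add: Psi_def kt_def Splus_def)
  then show "Psi e N s et p n ?x = Psi e N s et p n 0"
    unfolding Psi_def knn psi_iter_add kt using at_t by simp
  have "Splus s t n = Splus s p n"
    using minS_split[OF pt tn, of s] mt minS_le[of t t n s] tn by (simp add: Splus_def)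
  then show "Kker e N \<alpha> s p n ?x = map_pmf (\<lambda>v. real_of_int (Splus s p n) *\<^sub>R v) (alpha_pmf e N \<alpha>)"
    unfolding Kker_def knn k_iter_add kt using at_t Kker_zero[OF st sa tn]
    by (simp add: Kker_def kn_def bind_return_pmf)
qed

lemma flow_from_point:
  assumes st: "stepw s" and gd: "\<forall>k. et k \<in> e ` {1..N}" and sa: "set_pmf (alpha_pmf e N \<alpha>) \<subseteq> e ` {1..N}"
    and x: "x \<in> GN e N" and pn: "p \<le> n"
  shows "Psi e N s et p n x = (if ereal (real_of_int n) \<le> hit_time s p (norm x)
             then x + real_of_int (s n - s p) *\<^sub>R edir e N x else Psi e N s et p n 0)"
    and "Kker e N \<alpha> s p n x = (if ereal (real_of_int n) \<le> hit_time s p (norm x)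
             then return_pmf (x + real_of_int (s n - s p) *\<^sub>R edir e N x)
             else map_pmf (\<lambda>v. real_of_int (Splus s p n) *\<^sub>R v) (alpha_pmf e N \<alpha>))"
proof -
  obtain h' i where xi: "x = real h' *\<^sub>R e i" "i \<in> {1..N}" using x unfolding GN_def by blast
  define h where "h = int h'"
  have xh: "x = real_of_int h *\<^sub>R e i" using xi h_def by simp
  have "norm x = real_of_int h" using xi nrm by (simp add: h_def)
  moreover have "h \<ge> 0" by (simp add: h_def)
  ultimately have hit: "ereal (real_of_int n) \<le> hit_time s p (norm x) \<longleftrightarrow> (\<forall>q\<in>{p..<n}. s q - s p \<noteq> -h)"
    using hit_time_iff by simp
  have "Psi e N s et p n x = (if \<forall>q\<in>{p..<n}. s q - s p \<noteq> -h
             then x + real_of_int (s n - s p) *\<^sub>R edir e N x else Psi e N s et p n 0)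
    \<and> Kker e N \<alpha> s p n x = (if \<forall>q\<in>{p..<n}. s q - s p \<noteq> -h
             then return_pmf (x + real_of_int (s n - s p) *\<^sub>R edir e N x)
             else map_pmf (\<lambda>v. real_of_int (Splus s p n) *\<^sub>R v) (alpha_pmf e N \<alpha>))"
  proof (cases "h = 0")
    case True
    then have "x = 0" using xh by simp
    moreover have "n \<noteq> p \<Longrightarrow> \<not> (\<forall>q\<in>{p..<n}. s q - s p \<noteq> -h)" using pn True by force
    ultimately show ?thesis using Kker_zero[OF st sa pn] by (cases "n = p") (auto simp: Psi_def Kker_def)
  next
    case False
    then have h1: "h \<ge> 1" using h_def by simp
    show ?thesis
    proof (cases "\<forall>q\<in>{p..<n}. s q - s p \<noteq> -h")
      case True
      have "x + real_of_int (s n - s p) *\<^sub>R edir e N x = real_of_int (h + s n - s p) *\<^sub>R e i"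
        using xh edir_ray[OF xi(2), of "real_of_int h"] h1 by (simp add: scaleR_add_left[symmetric])
      then show ?thesis
        using flow_before_hit[OF st xi(2) h1, of p "nat (n - p)" et \<alpha>] True pn xh
        by (simp add: Psi_def Kker_def)
    next
      case False
      then obtain t where "t \<in> {p..<n}" "s t - s p = -h" "\<forall>m\<in>{p..<t}. s m - s p \<noteq> -h"
        using first_hit[of p n "\<lambda>q. s q - s p = -h"] by blast
      then show ?thesis using flow_after_hit[OF st gd sa xi(2) h1, of p t n] False xh by auto
    qed
  qed
  then show "Psi e N s et p n x = (if ereal (real_of_int n) \<le> hit_time s p (norm x)
             then x + real_of_int (s n - s p) *\<^sub>R edir e N x else Psi e N s et p n 0)"
    and "Kker e N \<alpha> s p n x = (if ereal (real_of_int n) \<le> hit_time s p (norm x)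
             then return_pmf (x + real_of_int (s n - s p) *\<^sub>R edir e N x)
             else map_pmf (\<lambda>v. real_of_int (Splus s p n) *\<^sub>R v) (alpha_pmf e N \<alpha>))"
    unfolding hit by simp_all
qed

end

section \<open>Events determined by finitely many coordinates of a path\<close>

lemma space_PiM_count_space [simp]: "space (PiM UNIV (\<lambda>_::int. count_space (UNIV::'a set))) = UNIV"
  by (simp add: space_PiM PiE_def extensional_def Pi_def)

lemma coordinate_sets:
  "{f::int \<Rightarrow> 'a. f l \<in> C} \<in> sets (PiM UNIV (\<lambda>_::int. count_space (UNIV::'a set)))"
proof -
  have "(\<lambda>f. f l) -` C \<inter> space (PiM UNIV (\<lambda>_::int. count_space (UNIV::'a set)))
        \<in> sets (PiM UNIV (\<lambda>_::int. count_space (UNIV::'a set)))"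
    by (rule measurable_sets[OF measurable_component_singleton]) auto
  then show ?thesis by (simp add: vimage_def)
qed

lemma finite_window_sets:
  "{s::int \<Rightarrow> int. map s xs = l} \<in> sets (PiM UNIV (\<lambda>_::int. count_space (UNIV::int set)))"
proof (induction xs arbitrary: l)
  case Nil
  then show ?case by (cases l) (simp_all, metis sets.top space_PiM_count_space)
next
  case (Cons x xs)
  show ?case
  proof (cases l)
    case (Cons y ys)
    have "{s::int \<Rightarrow> int. map s (x # xs) = l} = {s. s x \<in> {y}} \<inter> {s. map s xs = ys}" using Cons by auto
    then show ?thesis using Cons.IH[of ys] coordinate_sets[of x "{y}"] by (metis sets.Int)
  qed simp
qed

text \<open>A property of integer paths that only depends on the values on [a,b] is measurable for
  the product sigma-algebra: it is a countable union of cylinder sets.\<close>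
lemma window_dependent_sets:
  fixes P :: "(int \<Rightarrow> int) \<Rightarrow> bool"
  assumes dep: "\<And>s s'. (\<forall>k\<in>{a..b}. s k = s' k) \<Longrightarrow> P s = P s'"
  shows "{s. P s} \<in> sets (PiM UNIV (\<lambda>_::int. count_space (UNIV::int set)))"
proof -
  let ?L = "\<lambda>s::int \<Rightarrow> int. map s [a..b]"
  have "{s. P s} = (\<Union>l\<in>{l. \<exists>s. ?L s = l \<and> P s}. {s. ?L s = l})"
  proof (rule set_eqI, rule iffI)
    fix s assume "s \<in> (\<Union>l\<in>{l. \<exists>s. ?L s = l \<and> P s}. {s. ?L s = l})"
    then obtain s0 where "?L s = ?L s0" "P s0" by blast
    then show "s \<in> {s. P s}" using dep[of s s0] by (simp add: map_eq_conv)
  qed auto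
  also have "\<dots> \<in> sets (PiM UNIV (\<lambda>_::int. count_space (UNIV::int set)))"
    by (intro sets.countable_UN' countableI_type) (auto intro: finite_window_sets)
  finally show ?thesis .
qed

section \<open>Conditioning on an independent sigma-algebra\<close>

lemma (in prob_space) cond_exp_indicator_indep:
  assumes sub: "subalgebra M F" and indep: "indep_set (sets F) G"
    and E: "E \<in> sets F" and H: "H \<in> G"
  shows "AE x in M. real_cond_exp M F (indicator (E \<inter> H)) x = indicator E x * prob H"
proof -
  interpret finite_measure_subalgebra M F by unfold_locales (rule sub)
  have Eev: "E \<in> events" and Hev: "H \<in> events"
    using indep_setD_ev1[OF indep] indep_setD_ev2[OF indep] E H by auto
  show ?thesis
  proof (rule real_cond_exp_charact)
    fix B assume B: "B \<in> sets F"
    then have Bev: "B \<in> events" using indep_setD_ev1[OF indep] by auto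
    have "(\<integral>x\<in>B. indicator (E \<inter> H) x \<partial>M) = prob ((B \<inter> E) \<inter> H)"
      using Bev Eev Hev
      by (simp add: set_lebesgue_integral_def indicator_inter_arith[symmetric] Int_assoc sets.Int_space_eq2)
    also have "\<dots> = prob (B \<inter> E) * prob H"
      using B E H by (intro indep_setD[OF indep]) auto
    also have "\<dots> = (\<integral>x\<in>B. indicator E x * prob H \<partial>M)"
      using Bev Eev
      by (simp add: set_lebesgue_integral_def indicator_inter_arith[symmetric] mult.assoc[symmetric] sets.Int_space_eq2)
    finally show "(\<integral>x\<in>B. indicator (E \<inter> H) x \<partial>M) = (\<integral>x\<in>B. indicator E x * prob H \<partial>M)" .
  qed (use Eev Hev E in \<open>simp_all add: emeasure_eq_measure\<close>)
qed

lemma (in prob_space) cond_exp_indep_decomposition: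
  assumes sub: "subalgebra M F" and indep: "indep_set (sets F) G" and I: "finite I"
    and D: "D \<in> sets F" and E: "\<And>j. E j \<in> sets F" and H: "\<And>j. H j \<in> G"
  shows "AE x in M. real_cond_exp M F (\<lambda>x. indicator D x + (\<Sum>j\<in>I. indicator (E j \<inter> H j) x)) x
           = indicator D x + (\<Sum>j\<in>I. indicator (E j) x * prob (H j))"
proof -
  interpret finite_measure_subalgebra M F by unfold_locales (rule sub)
  have ev: "A \<in> sets F \<Longrightarrow> A \<in> events" for A using sub by (auto simp: subalgebra_def)
  have Hev: "H j \<in> events" for j using indep_setD_ev2[OF indep] H by auto
  have int: "integrable M (indicator (E j \<inter> H j) :: _ \<Rightarrow> real)" for j
    using ev[OF E] Hev by (simp add: emeasure_eq_measure)
  have intD: "integrable M (indicator D :: _ \<Rightarrow> real)"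
    using ev[OF D] by (simp add: emeasure_eq_measure)
  have "AE x in M. real_cond_exp M F (\<lambda>x. indicator D x + (\<Sum>j\<in>I. indicator (E j \<inter> H j) x)) x
      = real_cond_exp M F (indicator D) x + real_cond_exp M F (\<lambda>x. \<Sum>j\<in>I. indicator (E j \<inter> H j) x) x"
    using intD int by (intro real_cond_exp_add) auto
  moreover have "AE x in M. real_cond_exp M F (indicator D) x = indicator D x"
    using intD D by (intro real_cond_exp_F_meas) auto
  moreover have "AE x in M. real_cond_exp M F (\<lambda>x. \<Sum>j\<in>I. indicator (E j \<inter> H j) x) x
      = (\<Sum>j\<in>I. real_cond_exp M F (indicator (E j \<inter> H j)) x)"
    using int by (rule real_cond_exp_sum)
  moreover have "AE x in M. \<forall>j\<in>I. real_cond_exp M F (indicator (E j \<inter> H j)) x = indicator (E j) x * prob (H j)"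
    using I by (intro AE_finite_allI cond_exp_indicator_indep[OF sub indep E H])
  ultimately show ?thesis by eventually_elim simp
qed

section \<open>The probabilistic setting\<close>

locale setting = prob_space M for M :: "'w measure" +
  fixes S :: "'w \<Rightarrow> int \<Rightarrow> int" and eta :: "'w \<Rightarrow> int \<Rightarrow> 'v::real_normed_vector"
    and e :: "nat \<Rightarrow> 'v" and N :: nat and \<alpha> :: "nat \<Rightarrow> real"
  assumes apos: "\<forall>i\<in>{1..N}. \<alpha> i > 0" and asum: "(\<Sum>i=1..N. \<alpha> i) = 1"
    and injE: "inj_on e {1..N}" and nrmE: "\<forall>i\<in>{1..N}. norm (e i) = 1"
    and indS: "indep_vars (\<lambda>_. count_space UNIV) (\<lambda>k \<omega>. S \<omega> (k + 1) - S \<omega> k) UNIV"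
    and lawS: "\<forall>k. measure M {\<omega>\<in>space M. S \<omega> (k + 1) - S \<omega> k = 1} = 1/2
           \<and> measure M {\<omega>\<in>space M. S \<omega> (k + 1) - S \<omega> k = -1} = 1/2"
    and indE: "indep_vars (\<lambda>_. count_space UNIV) (\<lambda>k \<omega>. eta \<omega> k) UNIV"
    and lawE: "\<forall>k. \<forall>i\<in>{1..N}. measure M {\<omega>\<in>space M. eta \<omega> k = e i} = \<alpha> i"
    and indSE: "indep_set (sets (sigmaS M S)) (sets (sigmaS M eta))"

sublocale setting \<subseteq> star e N using injE nrmE by unfold_locales

context setting
begin

lemma alpha_support: "set_pmf (alpha_pmf e N \<alpha>) \<subseteq> e ` {1..N}"
  using alpha_pmf_facts(1)[OF apos asum] .

lemma discrete_rv_event: "random_variable (count_space UNIV) X \<Longrightarrow> {\<omega>\<in>space M. P (X \<omega>)} \<in> events"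
  using measurable_sets[of X M "count_space UNIV" "{x. P x}"] by (simp add: vimage_def Int_def conj_commute)

lemma increment_rv: "random_variable (count_space UNIV) (\<lambda>\<omega>. S \<omega> (k + 1) - S \<omega> k)"
  using indS unfolding indep_vars_def2 by auto

lemma eta_rv: "random_variable (count_space UNIV) (\<lambda>\<omega>. eta \<omega> k)"
  using indE unfolding indep_vars_def2 by auto

lemma eta_event: "{\<omega>\<in>space M. eta \<omega> k \<in> C} \<in> events"
  using discrete_rv_event[OF eta_rv] by auto

lemma AE_stepw: "AE \<omega> in M. stepw (S \<omega>)"
  unfolding stepw_def
proof (subst AE_all_countable, intro allI)
  fix k
  let ?A = "{\<omega>\<in>space M. S \<omega> (k + 1) - S \<omega> k = 1}"
  let ?B = "{\<omega>\<in>space M. S \<omega> (k + 1) - S \<omega> k = -1}"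
  have A: "?A \<in> events" and B: "?B \<in> events" using discrete_rv_event[OF increment_rv] by auto
  have "prob (?A \<union> ?B) = prob ?A + prob ?B" by (rule finite_measure_Union[OF A B]) auto
  then have "prob (?A \<union> ?B) = 1" using lawS by simp
  then have "AE \<omega> in M. \<omega> \<in> ?A \<union> ?B" by (rule AE_prob_1)
  then show "AE \<omega> in M. S \<omega> (k + 1) - S \<omega> k = 1 \<or> S \<omega> (k + 1) - S \<omega> k = -1"
    by eventually_elim auto
qed

lemma prob_eta_directions:
  assumes "Y \<in> events"
  shows "prob (\<Union>i\<in>{1..N}. {\<omega>\<in>space M. eta \<omega> k = e i} \<inter> Y)
       = (\<Sum>i\<in>{1..N}. prob ({\<omega>\<in>space M. eta \<omega> k = e i} \<inter> Y))"
proof (rule finite_measure_finite_Union)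
  show "(\<lambda>i. {\<omega> \<in> space M. eta \<omega> k = e i} \<inter> Y) ` {1..N} \<subseteq> events"
    using eta_event[of k "{_}"] assms by auto
  show "disjoint_family_on (\<lambda>i. {\<omega> \<in> space M. eta \<omega> k = e i} \<inter> Y) {1..N}"
    unfolding disjoint_family_on_def using injE by auto (metis One_nat_def atLeastAtMost_iff inj_onD)
qed simp

lemma AE_eta_directions: "AE \<omega> in M. \<forall>k. eta \<omega> k \<in> e ` {1..N}"
proof (subst AE_all_countable, intro allI)
  fix k
  have "prob (\<Union>i\<in>{1..N}. {\<omega>\<in>space M. eta \<omega> k = e i} \<inter> space M) = 1"
    using prob_eta_directions[of "space M" k] lawE asum by (simp add: Int_absorb2)
  then have "AE \<omega> in M. \<omega> \<in> (\<Union>i\<in>{1..N}. {\<omega>\<in>space M. eta \<omega> k = e i} \<inter> space M)" by (rule AE_prob_1)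
  then show "AE \<omega> in M. eta \<omega> k \<in> e ` {1..N}" by eventually_elim auto
qed

lemma AE_good:
  assumes "\<And>\<omega>. stepw (S \<omega>) \<Longrightarrow> \<forall>k. eta \<omega> k \<in> e ` {1..N} \<Longrightarrow> P \<omega>"
  shows "AE \<omega> in M. P \<omega>"
  using AE_stepw AE_eta_directions by eventually_elim (rule assms)

lemma eta_law: "prob {\<omega>\<in>space M. eta \<omega> l \<in> C} = (\<Sum>i\<in>{1..N}. \<alpha> i * indicator C (e i))"
proof -
  let ?H = "{\<omega>\<in>space M. eta \<omega> l \<in> C}"
  have "prob ?H = prob (\<Union>i\<in>{1..N}. {\<omega>\<in>space M. eta \<omega> l = e i} \<inter> ?H)"
  proof (rule measure_eq_AE)
    show "AE x in M. (x \<in> ?H) = (x \<in> (\<Union>i\<in>{1..N}. {\<omega>\<in>space M. eta \<omega> l = e i} \<inter> ?H))"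
      using AE_eta_directions by eventually_elim auto
    show "(\<Union>i\<in>{1..N}. {\<omega>\<in>space M. eta \<omega> l = e i} \<inter> ?H) \<in> events"
      using eta_event[of l "{_}"] eta_event[of l C] by (intro sets.finite_UN) auto
  qed (rule eta_event)
  also have "\<dots> = (\<Sum>i\<in>{1..N}. prob ({\<omega>\<in>space M. eta \<omega> l = e i} \<inter> ?H))"
    by (rule prob_eta_directions) (rule eta_event)
  also have "\<dots> = (\<Sum>i\<in>{1..N}. \<alpha> i * indicator C (e i))"
  proof (rule sum.cong)
    fix i assume i: "i \<in> {1..N}"
    show "prob ({\<omega>\<in>space M. eta \<omega> l = e i} \<inter> ?H) = \<alpha> i * indicator C (e i)"
    proof (cases "e i \<in> C")
      case True
      then have "{\<omega>\<in>space M. eta \<omega> l = e i} \<inter> ?H = {\<omega>\<in>space M. eta \<omega> l = e i}" by auto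
      then show ?thesis using lawE i True by simp
    next
      case False
      then have "{\<omega>\<in>space M. eta \<omega> l = e i} \<inter> ?H = {}" by auto
      then show ?thesis using False by simp
    qed
  qed simp
  finally show ?thesis .
qed

lemma sigmaS_event:
  assumes dep: "\<And>s s'. (\<forall>k\<in>{a..b}. s k = s' k) \<Longrightarrow> P s = P s'"
  shows "{\<omega>\<in>space M. P (S \<omega>)} \<in> sets (sigmaS M S)"
proof -
  have "S -` {s. P s} \<inter> space M \<in> sets (sigmaS M S)"
    unfolding sigmaS_def by (rule in_vimage_algebra) (rule window_dependent_sets[OF dep])
  moreover have "S -` {s. P s} \<inter> space M = {\<omega>\<in>space M. P (S \<omega>)}" by auto
  ultimately show ?thesis by simp
qed

lemma sigma_eta_event: "{\<omega>\<in>space M. eta \<omega> l \<in> C} \<in> sets (sigmaS M eta)"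
proof -
  have "eta -` {f. f l \<in> C} \<inter> space M \<in> sets (sigmaS M eta)"
    unfolding sigmaS_def by (rule in_vimage_algebra) (rule coordinate_sets)
  moreover have "eta -` {f. f l \<in> C} \<inter> space M = {\<omega>\<in>space M. eta \<omega> l \<in> C}" by auto
  ultimately show ?thesis by simp
qed

lemma subalgebra_sigmaS: "subalgebra M (sigmaS M S)"
  using indep_setD_ev1[OF indSE] unfolding subalgebra_def by (simp add: sigmaS_def)

lemma discrete_rv_apply:
  fixes D :: "'w \<Rightarrow> int" and \<phi> :: "'a \<Rightarrow> int \<Rightarrow> 'b"
  assumes X: "random_variable (count_space UNIV) X" and D: "random_variable (count_space UNIV) D"
  shows "random_variable (count_space UNIV) (\<lambda>\<omega>. \<phi> (X \<omega>) (D \<omega>))"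
proof (rule measurableI)
  fix A :: "'b set"
  have "(\<lambda>\<omega>. \<phi> (X \<omega>) (D \<omega>)) -` A \<inter> space M
      = (\<Union>d\<in>UNIV. {\<omega>\<in>space M. D \<omega> = d} \<inter> {\<omega>\<in>space M. \<phi> (X \<omega>) d \<in> A})" by blast
  also have "\<dots> \<in> events"
  proof (rule sets.countable_UN')
    have "{\<omega>\<in>space M. D \<omega> = d} \<inter> {\<omega>\<in>space M. \<phi> (X \<omega>) d \<in> A} \<in> events" for d
      by (rule sets.Int[OF discrete_rv_event[OF D] discrete_rv_event[OF X]])
    then show "(\<lambda>d. {\<omega>\<in>space M. D \<omega> = d} \<inter> {\<omega>\<in>space M. \<phi> (X \<omega>) d \<in> A}) ` UNIV \<subseteq> events"
      by blast
  qed simp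
  finally show "(\<lambda>\<omega>. \<phi> (X \<omega>) (D \<omega>)) -` A \<inter> space M \<in> events" .
qed simp

lemma psi_iter_rv: "random_variable (count_space UNIV) (\<lambda>\<omega>. psi_iter e N (S \<omega>) (eta \<omega>) p k x)"
proof (induction k)
  case (Suc k)
  define m where "m = p + int k"
  define Y where "Y = (\<lambda>\<omega>. psi_iter e N (S \<omega>) (eta \<omega>) p k x)"
  have eq: "(\<lambda>\<omega>. psi_iter e N (S \<omega>) (eta \<omega>) p (Suc k) x)
    = (\<lambda>\<omega>. if Y \<omega> = 0 then (\<lambda>v d. real_of_int (max 0 d) *\<^sub>R v) (eta \<omega> m) (S \<omega> (m + 1) - S \<omega> m)
           else (\<lambda>y d. y + real_of_int d *\<^sub>R edir e N y) (Y \<omega>) (S \<omega> (m + 1) - S \<omega> m))"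
    by (auto simp: Psi1_def Splus_step fun_eq_iff Y_def m_def)
  have Y: "random_variable (count_space UNIV) Y" using Suc by (simp add: Y_def)
  show ?case unfolding eq
    by (rule measurable_If[OF discrete_rv_apply[OF eta_rv increment_rv]
          discrete_rv_apply[OF Y increment_rv] discrete_rv_event[OF Y]])
qed simp

text \<open>Freezing lemma: conditionally on sigma(S), the direction eta_l drawn at a time l(S) is
  still distributed as sum_i alpha_i delta_{e_i}.  Here B, v, r, l are functionals of the path
  that only look at the window [a,b], and (r,l) almost surely takes values in a finite set I.\<close>
lemma cond_exp_frozen_direction:
  fixes B :: "(int \<Rightarrow> int) \<Rightarrow> bool" and v :: "(int \<Rightarrow> int) \<Rightarrow> 'v" and r l :: "(int \<Rightarrow> int) \<Rightarrow> int"
  assumes dep: "\<And>s s'. (\<forall>k\<in>{a..b}. s k = s' k) \<Longrightarrow> B s = B s' \<and> v s = v s' \<and> r s = r s' \<and> l s = l s'"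
    and I: "finite I" and range: "AE \<omega> in M. (r (S \<omega>), l (S \<omega>)) \<in> I"
    and f: "f \<in> borel_measurable M"
    and f_eq: "AE \<omega> in M. f \<omega> = (if B (S \<omega>) then indicator A (real_of_int (r (S \<omega>)) *\<^sub>R eta \<omega> (l (S \<omega>)))
                                  else indicator A (v (S \<omega>)))"
  shows "AE \<omega> in M. real_cond_exp M (sigmaS M S) f \<omega>
    = (if B (S \<omega>) then (\<Sum>i\<in>{1..N}. \<alpha> i * indicator A (real_of_int (r (S \<omega>)) *\<^sub>R e i))
       else indicator A (v (S \<omega>)))"
proof -
  define D where "D = {\<omega>\<in>space M. \<not> B (S \<omega>) \<and> v (S \<omega>) \<in> A}"
  define E where "E = (\<lambda>j. {\<omega>\<in>space M. B (S \<omega>) \<and> (r (S \<omega>), l (S \<omega>)) = j})"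
  define H where "H = (\<lambda>j::int \<times> int. {\<omega>\<in>space M. eta \<omega> (snd j) \<in> {w. real_of_int (fst j) *\<^sub>R w \<in> A}})"
  define g where "g = (\<lambda>\<omega>. indicator D \<omega> + (\<Sum>j\<in>I. indicator (E j \<inter> H j) \<omega>) :: real)"
  interpret finite_measure_subalgebra M "sigmaS M S" by unfold_locales (rule subalgebra_sigmaS)
  have DF: "D \<in> sets (sigmaS M S)"
    unfolding D_def by (rule sigmaS_event[of a b]) (metis dep)
  have EF: "E j \<in> sets (sigmaS M S)" for j
    unfolding E_def by (rule sigmaS_event[of a b]) (metis dep)
  have HG: "H j \<in> sets (sigmaS M eta)" for j unfolding H_def by (rule sigma_eta_event)
  have ev: "C \<in> sets (sigmaS M S) \<Longrightarrow> C \<in> events" for C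
    using subalgebra_sigmaS by (auto simp: subalgebra_def)
  have Hev: "H j \<in> events" for j unfolding H_def by (rule eta_event)
  have prob_H: "prob (H j) = (\<Sum>i\<in>{1..N}. \<alpha> i * indicator A (real_of_int (fst j) *\<^sub>R e i))" for j
    unfolding H_def eta_law by (simp add: indicator_def)
  have E_ind: "indicator (E j) \<omega> * c = (if (r (S \<omega>), l (S \<omega>)) = j then (if B (S \<omega>) then c else 0) else (0::real))"
    if "\<omega> \<in> space M" for \<omega> j c using that by (auto simp: E_def indicator_def)
  have EH_ind: "indicator (E j \<inter> H j) \<omega> = (if (r (S \<omega>), l (S \<omega>)) = j then
      (if B (S \<omega>) then indicator A (real_of_int (r (S \<omega>)) *\<^sub>R eta \<omega> (l (S \<omega>))) else 0) else (0::real))"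
    if "\<omega> \<in> space M" for \<omega> j using that by (auto simp: E_def H_def indicator_def)
  have D_ind: "indicator D \<omega> = (if B (S \<omega>) then 0 else indicator A (v (S \<omega>)) :: real)"
    if "\<omega> \<in> space M" for \<omega> using that by (auto simp: D_def indicator_def)
  text \<open>Split f according to the value j of (r,l); only the H_j depend on eta.\<close>
  have "AE \<omega> in M. f \<omega> = g \<omega>"
    using f_eq range AE_space by eventually_elim (simp add: g_def D_ind EH_ind sum.delta'[OF I])
  moreover have "g \<in> borel_measurable M"
    using ev[OF DF] ev[OF EF] Hev unfolding g_def
    by (intro borel_measurable_add borel_measurable_sum borel_measurable_indicator sets.Int)
  ultimately have "AE \<omega> in M. real_cond_exp M (sigmaS M S) f \<omega> = real_cond_exp M (sigmaS M S) g \<omega>"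
    using f by (intro real_cond_exp_cong)
  moreover have "AE \<omega> in M. real_cond_exp M (sigmaS M S) g \<omega>
      = indicator D \<omega> + (\<Sum>j\<in>I. indicator (E j) \<omega> * prob (H j))"
    unfolding g_def by (rule cond_exp_indep_decomposition[OF subalgebra_sigmaS indSE I DF EF HG])
  ultimately show ?thesis
    using range AE_space by eventually_elim (simp add: D_ind E_ind prob_H sum.delta'[OF I])
qed

lemma norm_flow_zero_AE:
  "p \<le> n \<Longrightarrow> AE \<omega> in M. norm (Psi e N (S \<omega>) (eta \<omega>) p n 0) = real_of_int (Splus (S \<omega>) p n)"
  by (rule AE_good) (rule norm_Psi_zero)

lemma direction_min_right_AE:
  "p < n \<and> n < q \<Longrightarrow> AE \<omega> in M. minS (S \<omega>) p q = minS (S \<omega>) n q \<longrightarrow>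
     edir e N (Psi e N (S \<omega>) (eta \<omega>) p q 0) = edir e N (Psi e N (S \<omega>) (eta \<omega>) n q 0)"
  by (intro AE_good impI) (auto intro: edir_Psi_min_right)

lemma direction_min_left_AE:
  "p < n \<and> n < q \<Longrightarrow> AE \<omega> in M. minS (S \<omega>) p n = minS (S \<omega>) p q \<and> (\<forall>j\<in>{n..q}. Splus (S \<omega>) p j > 0) \<longrightarrow>
     edir e N (Psi e N (S \<omega>) (eta \<omega>) p n 0) = edir e N (Psi e N (S \<omega>) (eta \<omega>) p q 0)"
  by (intro AE_good impI) (auto intro: edir_Psi_min_left)

lemma flow_AE:
  "x \<in> GN e N \<Longrightarrow> p \<le> n \<Longrightarrow> AE \<omega> in M. Psi e N (S \<omega>) (eta \<omega>) p n x =
     (if ereal (real_of_int n) \<le> hit_time (S \<omega>) p (norm x)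
      then x + real_of_int (S \<omega> n - S \<omega> p) *\<^sub>R edir e N x
      else Psi e N (S \<omega>) (eta \<omega>) p n 0)"
  by (rule AE_good) (rule flow_from_point(1)[OF _ _ alpha_support])

lemma kernel_AE:
  "x \<in> GN e N \<Longrightarrow> p \<le> n \<Longrightarrow> AE \<omega> in M. Kker e N \<alpha> (S \<omega>) p n x =
     (if ereal (real_of_int n) \<le> hit_time (S \<omega>) p (norm x)
      then return_pmf (x + real_of_int (S \<omega> n - S \<omega> p) *\<^sub>R edir e N x)
      else map_pmf (\<lambda>v. real_of_int (Splus (S \<omega>) p n) *\<^sub>R v) (alpha_pmf e N \<alpha>))"
  by (rule AE_good) (rule flow_from_point(2)[OF _ _ alpha_support])

text \<open>K_{p,n}(x) is a version of the conditional law of Psi_{p,n}(x) given sigma(S).\<close>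
lemma cond_law_AE:
  assumes x: "x \<in> GN e N" and pn: "p \<le> n"
  shows "AE \<omega> in M. real_cond_exp M (sigmaS M S) (\<lambda>\<omega>. indicator A (Psi e N (S \<omega>) (eta \<omega>) p n x)) \<omega>
              = measure_pmf.prob (Kker e N \<alpha> (S \<omega>) p n x) A"
proof -
  obtain h' i where xi: "x = real h' *\<^sub>R e i" "i \<in> {1..N}" using x unfolding GN_def by blast
  define h where "h = int h'"
  have nx: "norm x = real_of_int h" and h: "h \<ge> 0" using xi nrmE by (simp_all add: h_def)
  define hits where "hits = (\<lambda>s::int \<Rightarrow> int. \<exists>q\<in>{p..<n}. s q - s p = -h)"
  define y where "y = (\<lambda>s::int \<Rightarrow> int. x + real_of_int (s n - s p) *\<^sub>R edir e N x)"
  have hit: "ereal (real_of_int n) \<le> hit_time s p (norm x) \<longleftrightarrow> \<not> hits s" for s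
    unfolding nx hits_def using hit_time_iff[OF h] by blast
  have scaled_alpha_law: "measure_pmf.prob (map_pmf (\<lambda>v. real_of_int c *\<^sub>R v) (alpha_pmf e N \<alpha>)) A
      = (\<Sum>i\<in>{1..N}. \<alpha> i * indicator A (real_of_int c *\<^sub>R e i))" for c
    using alpha_pmf_facts(2)[OF apos asum, where e = e and C = "(\<lambda>v. real_of_int c *\<^sub>R v) -` A"]
    by (simp add: indicator_vimage)
  have dep: "hits s = hits s' \<and> y s = y s' \<and> Splus s p n = Splus s' p n \<and> lastmin s p n = lastmin s' p n"
    if "\<forall>k\<in>{p..n}. s k = s' k" for s s'
    using that window_functionals[OF that] pn by (auto simp: hits_def y_def Splus_def)
  have "AE \<omega> in M. real_cond_exp M (sigmaS M S) (\<lambda>\<omega>. indicator A (Psi e N (S \<omega>) (eta \<omega>) p n x)) \<omega>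
      = (if hits (S \<omega>) then (\<Sum>i\<in>{1..N}. \<alpha> i * indicator A (real_of_int (Splus (S \<omega>) p n) *\<^sub>R e i))
         else indicator A (y (S \<omega>)))"
  proof (rule cond_exp_frozen_direction[where I = "{0..n - p} \<times> {p..n}"])
    show "AE \<omega> in M. (Splus (S \<omega>) p n, lastmin (S \<omega>) p n) \<in> {0..n - p} \<times> {p..n}"
      using Splus_nonneg[OF pn] Splus_le[OF _ pn] lastmin_in[OF pn] by (intro AE_good) auto
    show "(\<lambda>\<omega>. indicator A (Psi e N (S \<omega>) (eta \<omega>) p n x) :: real) \<in> borel_measurable M"
      unfolding Psi_def by (rule measurable_compose[OF psi_iter_rv]) simp
    show "AE \<omega> in M. indicator A (Psi e N (S \<omega>) (eta \<omega>) p n x) =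
        (if hits (S \<omega>) then indicator A (real_of_int (Splus (S \<omega>) p n) *\<^sub>R eta \<omega> (lastmin (S \<omega>) p n))
         else indicator A (y (S \<omega>)))"
      using flow_from_point(1)[OF _ _ alpha_support x pn] Psi_zero[OF _ _ pn] hit
      by (intro AE_good) (simp add: y_def)
  qed (use dep in auto)
  moreover have "AE \<omega> in M. measure_pmf.prob (Kker e N \<alpha> (S \<omega>) p n x) A
      = (if hits (S \<omega>) then (\<Sum>i\<in>{1..N}. \<alpha> i * indicator A (real_of_int (Splus (S \<omega>) p n) *\<^sub>R e i))
         else indicator A (y (S \<omega>)))"
    using flow_from_point(2)[OF _ _ alpha_support x pn] hit scaled_alpha_law
    by (intro AE_good) (simp add: y_def)
  ultimately show ?thesis by eventually_elim simp
qed

end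

text \<open>The hypotheses instantiate the probabilistic setting; the proposition then collects the statements proved above.\<close>
theorem proposition3:
  fixes M :: "'w measure" and S :: "'w \<Rightarrow> int \<Rightarrow> int"
    and eta :: "'w \<Rightarrow> int \<Rightarrow> 'v::real_normed_vector"
    and e :: "nat \<Rightarrow> 'v" and N :: nat and \<alpha> :: "nat \<Rightarrow> real"
  assumes "prob_space M"
    and "N \<ge> 1" and "\<forall>i\<in>{1..N}. \<alpha> i > 0" and "(\<Sum>i=1..N. \<alpha> i) = 1"
    and "inj_on e {1..N}" and "\<forall>i\<in>{1..N}. norm (e i) = 1"
    and "\<forall>\<omega>\<in>space M. S \<omega> 0 = 0"
    and "prob_space.indep_vars M (\<lambda>_. count_space UNIV) (\<lambda>k \<omega>. S \<omega> (k + 1) - S \<omega> k) UNIV"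
    and "\<forall>k. measure M {\<omega>\<in>space M. S \<omega> (k + 1) - S \<omega> k = 1} = 1/2
           \<and> measure M {\<omega>\<in>space M. S \<omega> (k + 1) - S \<omega> k = -1} = 1/2"
    and "prob_space.indep_vars M (\<lambda>_. count_space UNIV) (\<lambda>k \<omega>. eta \<omega> k) UNIV"
    and "\<forall>k. \<forall>i\<in>{1..N}. measure M {\<omega>\<in>space M. eta \<omega> k = e i} = \<alpha> i"
    and "prob_space.indep_set M (sets (sigmaS M S)) (sets (sigmaS M eta))"
  shows
    "(\<forall>p n. p \<le> n \<longrightarrow>
        (AE \<omega> in M. norm (Psi e N (S \<omega>) (eta \<omega>) p n 0) = real_of_int (Splus (S \<omega>) p n)))
     \<and> (\<forall>p n q. p < n \<and> n < q \<longrightarrow>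
        (AE \<omega> in M. minS (S \<omega>) p q = minS (S \<omega>) n q \<longrightarrow>
            edir e N (Psi e N (S \<omega>) (eta \<omega>) p q 0) = edir e N (Psi e N (S \<omega>) (eta \<omega>) n q 0)))
     \<and> (\<forall>p n q. p < n \<and> n < q \<longrightarrow>
        (AE \<omega> in M. minS (S \<omega>) p n = minS (S \<omega>) p q \<and> (\<forall>j\<in>{n..q}. Splus (S \<omega>) p j > 0) \<longrightarrow>
            edir e N (Psi e N (S \<omega>) (eta \<omega>) p n 0) = edir e N (Psi e N (S \<omega>) (eta \<omega>) p q 0)))
     \<and> (\<forall>p n. \<forall>x\<in>GN e N. p \<le> n \<longrightarrow>
        (AE \<omega> in M. Psi e N (S \<omega>) (eta \<omega>) p n x =
            (if ereal (real_of_int n) \<le> hit_time (S \<omega>) p (norm x)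
             then x + real_of_int (S \<omega> n - S \<omega> p) *\<^sub>R edir e N x
             else Psi e N (S \<omega>) (eta \<omega>) p n 0)))
     \<and> (\<forall>p n. \<forall>x\<in>GN e N. p \<le> n \<longrightarrow>
        (\<forall>A. AE \<omega> in M.
            real_cond_exp M (sigmaS M S) (\<lambda>\<omega>. indicator A (Psi e N (S \<omega>) (eta \<omega>) p n x)) \<omega>
              = measure_pmf.prob (Kker e N \<alpha> (S \<omega>) p n x) A)
        \<and> (AE \<omega> in M. Kker e N \<alpha> (S \<omega>) p n x =
            (if ereal (real_of_int n) \<le> hit_time (S \<omega>) p (norm x)
             then return_pmf (x + real_of_int (S \<omega> n - S \<omega> p) *\<^sub>R edir e N x)
             else map_pmf (\<lambda>v. real_of_int (Splus (S \<omega>) p n) *\<^sub>R v) (alpha_pmf e N \<alpha>))))"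
proof -
  interpret setting M S eta e N \<alpha>
    using assms unfolding setting_def setting_axioms_def by auto
  show ?thesis
    using norm_flow_zero_AE direction_min_right_AE direction_min_left_AE flow_AE kernel_AE cond_law_AE
    by blast
qed

end
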